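(* Let $n=p^3q$ with primes $3\le p<q$, and let $\mathcal{D}_{S_1},\mathcal{D}_{S_2}\subseteq\mathcal{D}_{[n]}\setminus\{n\}$ with $1\in\mathcal{D}_{S_1}\cap\mathcal{D}_{S_2}$. If $\mathrm{Spec}(\mathrm{ICG}(n,\mathcal{D}_{S_1}))=\mathrm{Spec}(\mathrm{ICG}(n,\mathcal{D}_{S_2}))$, then $\mathcal{D}_{S_1}=\mathcal{D}_{S_2}$.
   Context: Identify $\mathbb{Z}_n$ with $[n]=\{1,\dots,n\}$. For a divisor $d$ of $n$, $G_n(d)=\{j\in[n]:\gcd(j,n)=d\}$; $\mathcal{D}_{[n]}$ is the set of positive divisors of $n$. For $\mathcal{D}\subseteq\mathcal{D}_{[n]}\setminus\{n\}$, $\mathrm{ICG}(n,\mathcal{D})=\mathrm{Cay}(\mathbb{Z}_n,S)$ with $S=\bigcup_{d\in\mathcal{D}}G_n(d)$, and $\mathcal{D}=\mathcal{D}_S$. $\mathrm{Spec}$ is the multiset of adjacency eigenvalues. *)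

theory Defs
  imports "Jordan_Normal_Form.Char_Poly" "HOL-Library.Multiset"
begin

definition G :: "nat \<Rightarrow> nat \<Rightarrow> nat set" where
  "G n d = {j \<in> {1..n}. gcd j n = d}"

definition divisors_of :: "nat \<Rightarrow> nat set" where
  "divisors_of n = {d. 0 < d \<and> d dvd n}"

definition conn_set :: "nat \<Rightarrow> nat set \<Rightarrow> nat set" where
  "conn_set n D = (\<Union>d\<in>D. G n d)"

(* Cayley graph Cay(Z_n, S): vertex i (0 <= i < n) stands for the residue i mod n
   (so vertex 0 is the element n of [n]); i ~ j iff j - i is congruent mod n to some s in S. *)
definition cay_adj :: "nat \<Rightarrow> nat set \<Rightarrow> complex mat" where
  "cay_adj n S = mat n n (\<lambda>(i, j).
      if (\<exists>s\<in>S. int s mod int n = (int j - int i) mod int n) then 1 else 0)"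

definition ICG_adj :: "nat \<Rightarrow> nat set \<Rightarrow> complex mat" where
  "ICG_adj n D = cay_adj n (conn_set n D)"

definition Spec :: "complex mat \<Rightarrow> complex multiset" where
  "Spec A = (THE M. char_poly A = (\<Prod>a\<in>#M. [:- a, 1:]))"

end

theory Submission
  imports Defs
begin

text \<open>
  The adjacency matrix of \<open>Cay(\<int>\<^sub>n, S)\<close> is circulant, hence diagonalised by the discrete
  Fourier transform: its eigenvalues are \<open>\<lambda>(k) = \<Sum>s\<in>S. \<omega>\<^sup>s\<^sup>k\<close> for \<open>k < n\<close>. When \<open>S\<close> is a union
  of gcd classes of \<open>n = p\<^sup>3q\<close>, each \<open>\<lambda>(k)\<close> is an integer combination of sums of \<open>\<omega>\<^sup>j\<^sup>k\<close> over
  the multiples of divisors of \<open>n\<close>, and modulo \<open>q\<close> it depends only on \<open>min(v\<^sub>p(k), 3)\<close>. The four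
  classes of such \<open>k\<close> have the super-increasing sizes \<open>p\<^sup>2(p-1)q, p(p-1)q, (p-1)q, q\<close>, so equal
  spectra force \<open>\<lambda>(1), \<lambda>(p), \<lambda>(p\<^sup>2)\<close> to agree modulo \<open>q\<close>. Together with the equality of the
  largest eigenvalues \<open>\<lambda>(0) = |S|\<close>, these congruences determine the 0/1-indicator of the divisor
  set, since differences of indicators lie in \<open>{-1, 0, 1}\<close> and \<open>q\<close> is a prime larger than \<open>p\<close>.
\<close>

definition unit_root :: "nat \<Rightarrow> complex" where
  "unit_root n = cis (2 * pi / real n)"

lemma unit_root_power: "unit_root n ^ m = cis (2 * pi * real m / real n)"
  by (simp add: unit_root_def DeMoivre field_simps)

lemma unit_root_nonzero [simp]: "unit_root n \<noteq> 0"
  by (simp add: unit_root_def)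

lemma norm_unit_root_power [simp]: "norm (unit_root n ^ m) = 1"
  by (simp add: unit_root_power)

lemma unit_root_power_eq_1_iff:
  assumes "n > 0"
  shows "unit_root n ^ m = 1 \<longleftrightarrow> n dvd m"
proof
  assume "n dvd m"
  then obtain t where t: "m = n * t" by auto
  have "cis (2 * (pi * real t)) = 1"
    using cis_multiple_2pi[of "real t"] by (simp add: mult.assoc)
  then show "unit_root n ^ m = 1" using assms by (simp add: unit_root_power t)
next
  assume "unit_root n ^ m = 1"
  then have "Re (cis (2 * pi * real m / real n)) = 1" by (simp add: unit_root_power)
  then have "cos (2 * pi * real m / real n) = 1" by simp
  then obtain i :: int where "2 * pi * real m / real n = of_int i * 2 * pi"
    using cos_one_2pi_int by blast
  then have "real m = of_int i * real n" using assms by (simp add: field_simps)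
  then have "int m = i * int n"
    by (metis of_int_eq_iff of_int_mult of_int_of_nat_eq)
  then show "n dvd m"
    by (metis dvd_triv_right int_dvd_int_iff)
qed

lemma unit_root_power_mod:
  assumes "n > 0"
  shows "unit_root n ^ m = unit_root n ^ (m mod n)"
proof -
  have "unit_root n ^ m = (unit_root n ^ n) ^ (m div n) * unit_root n ^ (m mod n)"
    by (simp flip: power_mult power_add)
  then show ?thesis using unit_root_power_eq_1_iff[OF assms, of n] by simp
qed

lemma unit_root_power_inj:
  assumes "n > 0" "i < n" "j < n" "unit_root n ^ i = unit_root n ^ j"
  shows "i = j"
proof -
  have "i = j" if ij: "i \<le> j" "j < n" "unit_root n ^ i = unit_root n ^ j" for i j
  proof -
    have "unit_root n ^ j = unit_root n ^ i * unit_root n ^ (j - i)"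
      using ij(1) by (simp flip: power_add)
    then have "unit_root n ^ (j - i) = 1" using ij(3) by simp
    then have "n dvd j - i" using unit_root_power_eq_1_iff[OF assms(1)] by simp
    moreover have "j - i < n" using ij(2) by linarith
    ultimately show "i = j" using ij(1) by (cases "j - i = 0") (auto dest: dvd_imp_le)
  qed
  from this[of i j] this[of j i] show ?thesis using assms by (cases "i \<le> j") auto
qed

lemma unit_root_orthogonality:
  assumes "n > 0" "i < n" "j < n"
  shows "(\<Sum>l<n. unit_root n ^ (i * l) * inverse (unit_root n) ^ (l * j)) =
    (if i = j then of_nat n else 0)"
proof -
  define z where "z = unit_root n ^ i * inverse (unit_root n) ^ j"
  have terms: "unit_root n ^ (i * l) * inverse (unit_root n) ^ (l * j) = z ^ l" for l
    by (simp add: z_def power_mult_distrib flip: power_mult, simp add: mult.commute)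
  have root: "unit_root n ^ n = 1" using unit_root_power_eq_1_iff[OF assms(1)] by simp
  then have "inverse (unit_root n) ^ n = 1" by (simp add: power_inverse)
  with root have "z ^ n = 1"
    by (simp add: z_def power_mult_distrib flip: power_mult[of _ i] power_mult[of _ j],
        simp add: power_mult mult.commute[of i] mult.commute[of j])
  moreover have "z = 1 \<longleftrightarrow> i = j"
  proof
    assume "z = 1"
    then have "unit_root n ^ i = unit_root n ^ j" by (simp add: z_def field_simps power_inverse)
    then show "i = j" using unit_root_power_inj[OF assms] by simp
  qed (simp add: z_def power_inverse)
  ultimately show ?thesis by (simp add: terms sum_gp_strict)
qed

lemma index_mult_mat_sum:
  assumes "A \<in> carrier_mat n n" "B \<in> carrier_mat n n" "i < n" "j < n"
  shows "(A * B) $$ (i, j) = (\<Sum>l<n. A $$ (i, l) * B $$ (l, j))"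
  using assms by (simp add: scalar_prod_def lessThan_atLeast0)

definition dft_mat :: "nat \<Rightarrow> complex mat" where
  "dft_mat n = mat n n (\<lambda>(i, j). unit_root n ^ (i * j))"

definition inverse_dft_mat :: "nat \<Rightarrow> complex mat" where
  "inverse_dft_mat n = mat n n (\<lambda>(i, j). inverse (unit_root n) ^ (i * j) / of_nat n)"

lemma dft_mat_carrier [simp]: "dft_mat n \<in> carrier_mat n n"
  and dim_dft_mat [simp]: "dim_row (dft_mat n) = n" "dim_col (dft_mat n) = n"
  and inverse_dft_mat_carrier [simp]: "inverse_dft_mat n \<in> carrier_mat n n"
  and dim_inverse_dft_mat [simp]: "dim_row (inverse_dft_mat n) = n" "dim_col (inverse_dft_mat n) = n"
  by (simp_all add: dft_mat_def inverse_dft_mat_def)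

lemma dft_mat_mult_inverse:
  assumes "n > 0"
  shows "dft_mat n * inverse_dft_mat n = 1\<^sub>m n"
proof (rule eq_matI)
  fix i j assume "i < dim_row (1\<^sub>m n)" "j < dim_col (1\<^sub>m n)"
  then have ij: "i < n" "j < n" by auto
  have "(dft_mat n * inverse_dft_mat n) $$ (i, j) =
      (\<Sum>l<n. unit_root n ^ (i * l) * inverse (unit_root n) ^ (l * j)) / of_nat n"
    using ij by (subst index_mult_mat_sum[of _ n])
      (simp_all add: dft_mat_def inverse_dft_mat_def sum_divide_distrib)
  then show "(dft_mat n * inverse_dft_mat n) $$ (i, j) = 1\<^sub>m n $$ (i, j)"
    using ij assms by (simp add: unit_root_orthogonality)
qed simp_all

lemma inverse_dft_mat_mult_dft:
  assumes "n > 0"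
  shows "inverse_dft_mat n * dft_mat n = 1\<^sub>m n"
proof (rule eq_matI)
  fix i j assume "i < dim_row (1\<^sub>m n)" "j < dim_col (1\<^sub>m n)"
  then have ij: "i < n" "j < n" by auto
  have "(inverse_dft_mat n * dft_mat n) $$ (i, j) =
      (\<Sum>l<n. unit_root n ^ (j * l) * inverse (unit_root n) ^ (l * i)) / of_nat n"
    using ij by (subst index_mult_mat_sum[of _ n])
      (simp_all add: dft_mat_def inverse_dft_mat_def sum_divide_distrib mult.commute)
  then show "(inverse_dft_mat n * dft_mat n) $$ (i, j) = 1\<^sub>m n $$ (i, j)"
    using ij assms by (simp add: unit_root_orthogonality)
qed simp_all

definition residue_indicator :: "nat \<Rightarrow> nat set \<Rightarrow> nat \<Rightarrow> complex" where
  "residue_indicator n S r = (if \<exists>s\<in>S. int s mod int n = int r then 1 else 0)"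

definition cayley_eigenvalue :: "nat \<Rightarrow> nat set \<Rightarrow> nat \<Rightarrow> complex" where
  "cayley_eigenvalue n S k = (\<Sum>r<n. residue_indicator n S r * unit_root n ^ (r * k))"

definition cayley_eigenvalue_mat :: "nat \<Rightarrow> nat set \<Rightarrow> complex mat" where
  "cayley_eigenvalue_mat n S = mat n n (\<lambda>(i, j). if i = j then cayley_eigenvalue n S i else 0)"

lemma cay_adj_carrier [simp]: "cay_adj n S \<in> carrier_mat n n"
  and dim_cay_adj [simp]: "dim_row (cay_adj n S) = n" "dim_col (cay_adj n S) = n"
  by (simp_all add: cay_adj_def)

lemma cay_adj_index:
  assumes "i < n" "j < n"
  shows "cay_adj n S $$ (i, j) = residue_indicator n S ((j + n - i) mod n)"
proof -
  have "int ((j + n - i) mod n) = (int j - int i + int n) mod int n"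
    using assms by (simp add: zmod_int of_nat_diff algebra_simps)
  also have "\<dots> = (int j - int i) mod int n" by simp
  finally show ?thesis using assms by (simp add: cay_adj_def residue_indicator_def)
qed

lemma cay_adj_mult_dft_mat_index:
  assumes n: "n > 0" and ik: "i < n" "k < n"
  shows "(cay_adj n S * dft_mat n) $$ (i, k) = unit_root n ^ (i * k) * cayley_eigenvalue n S k"
proof -
  have "(cay_adj n S * dft_mat n) $$ (i, k) =
      (\<Sum>j<n. residue_indicator n S ((j + n - i) mod n) * unit_root n ^ (j * k))"
    using ik by (subst index_mult_mat_sum[of _ n]) (simp_all add: dft_mat_def cay_adj_index)
  also have "\<dots> = (\<Sum>r<n. residue_indicator n S r * unit_root n ^ (((r + i) mod n) * k))"
  proof (rule sum.reindex_bij_witness[of _ "\<lambda>r. (r + i) mod n" "\<lambda>j. (j + n - i) mod n"])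
    fix j assume j: "j \<in> {..<n}"
    have "((j + n - i) mod n + i) mod n = (j + n - i + i) mod n" by (simp add: mod_add_left_eq)
    also have "\<dots> = j" using j ik by simp
    finally show "((j + n - i) mod n + i) mod n = j" .
    then show "residue_indicator n S ((j + n - i) mod n) *
        unit_root n ^ (((j + n - i) mod n + i) mod n * k) =
        residue_indicator n S ((j + n - i) mod n) * unit_root n ^ (j * k)" by simp
    show "(j + n - i) mod n \<in> {..<n}" using n by simp
  next
    fix r assume r: "r \<in> {..<n}"
    have "((r + i) mod n + n - i) mod n = ((r + i) mod n + (n - i)) mod n" using ik by simp
    also have "\<dots> = (r + i + (n - i)) mod n" by (simp add: mod_add_left_eq)
    also have "r + i + (n - i) = r + n" using ik by simp
    finally show "((r + i) mod n + n - i) mod n = r" using r by simp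
    show "(r + i) mod n \<in> {..<n}" using n by simp
  qed
  also have "\<dots> = (\<Sum>r<n. unit_root n ^ (i * k) * (residue_indicator n S r * unit_root n ^ (r * k)))"
  proof (rule sum.cong[OF refl])
    fix r
    have "unit_root n ^ (((r + i) mod n) * k) = unit_root n ^ ((r + i) * k)"
      using unit_root_power_mod[OF n, of "(r + i) mod n * k"] unit_root_power_mod[OF n, of "(r + i) * k"]
      by (simp add: mod_mult_left_eq)
    then show "residue_indicator n S r * unit_root n ^ (((r + i) mod n) * k) =
        unit_root n ^ (i * k) * (residue_indicator n S r * unit_root n ^ (r * k))"
      by (simp add: algebra_simps power_add)
  qed
  finally show ?thesis by (simp add: cayley_eigenvalue_def sum_distrib_left)
qed

lemma cay_adj_mult_dft_mat:
  assumes "n > 0"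
  shows "cay_adj n S * dft_mat n = dft_mat n * cayley_eigenvalue_mat n S"
proof (rule eq_matI)
  fix i k assume "i < dim_row (dft_mat n * cayley_eigenvalue_mat n S)"
    "k < dim_col (dft_mat n * cayley_eigenvalue_mat n S)"
  then have ik: "i < n" "k < n" by (simp_all add: dft_mat_def cayley_eigenvalue_mat_def)
  have "(dft_mat n * cayley_eigenvalue_mat n S) $$ (i, k) =
      (\<Sum>l<n. unit_root n ^ (i * l) * (if l = k then cayley_eigenvalue n S l else 0))"
    using ik by (subst index_mult_mat_sum[of _ n])
      (simp_all add: dft_mat_def cayley_eigenvalue_mat_def)
  also have "\<dots> = unit_root n ^ (i * k) * cayley_eigenvalue n S k"
    using ik by (simp add: if_distrib[of "\<lambda>x. _ * x"] cong: if_cong)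
  finally show "(cay_adj n S * dft_mat n) $$ (i, k) = (dft_mat n * cayley_eigenvalue_mat n S) $$ (i, k)"
    using cay_adj_mult_dft_mat_index[OF assms ik] by simp
qed (simp_all add: dft_mat_def cayley_eigenvalue_mat_def)

lemma char_poly_cay_adj:
  assumes n: "n > 0"
  shows "char_poly (cay_adj n S) = (\<Prod>a\<leftarrow>map (cayley_eigenvalue n S) [0..<n]. [:- a, 1:])"
proof -
  have D: "cayley_eigenvalue_mat n S \<in> carrier_mat n n" by (simp add: cayley_eigenvalue_mat_def)
  have "cay_adj n S = cay_adj n S * (dft_mat n * inverse_dft_mat n)"
    using cay_adj_carrier[of n S] by (simp add: dft_mat_mult_inverse[OF n])
  also have "\<dots> = dft_mat n * cayley_eigenvalue_mat n S * inverse_dft_mat n"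
    using D by (simp add: assoc_mult_mat[of _ n n _ n _ n, symmetric] cay_adj_mult_dft_mat[OF n])
  finally have "similar_mat (cay_adj n S) (cayley_eigenvalue_mat n S)"
    using D by (intro similar_matI[OF _ dft_mat_mult_inverse[OF n] inverse_dft_mat_mult_dft[OF n]])
      auto
  then have "char_poly (cay_adj n S) = char_poly (cayley_eigenvalue_mat n S)"
    by (rule char_poly_similar)
  also have "\<dots> = (\<Prod>a\<leftarrow>diag_mat (cayley_eigenvalue_mat n S). [:- a, 1:])"
    by (rule char_poly_upper_triangular[OF D]) (auto simp: upper_triangular_def cayley_eigenvalue_mat_def)
  also have "diag_mat (cayley_eigenvalue_mat n S) = map (cayley_eigenvalue n S) [0..<n]"
    by (rule nth_equalityI) (auto simp: diag_mat_def cayley_eigenvalue_mat_def)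
  finally show ?thesis .
qed

lemma proots_prod_linear_factors: "proots (\<Prod>a\<in>#M. [:- a, 1:]) = (M :: 'a :: idom multiset)"
proof (induction M)
  case (add a M)
  have "(\<Prod>a\<in>#M. [:- a, 1:]) \<noteq> (0 :: 'a poly)" by (auto simp: prod_mset_zero_iff)
  then show ?case using add.IH by (simp add: proots_mult del: mult_pCons_left)
qed simp

lemma Spec_eq_mset_if_char_poly:
  assumes "char_poly A = (\<Prod>a\<leftarrow>xs. [:- a, 1:])"
  shows "Spec A = mset xs"
proof -
  have factored: "char_poly A = (\<Prod>a\<in>#mset xs. [:- a, 1:])"
    using assms by (simp add: prod_mset_prod_list flip: mset_map)
  show ?thesis
    unfolding Spec_def
    by (rule the_equality) (fact factored, metis factored proots_prod_linear_factors)
qed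

lemma Spec_cay_adj:
  "n > 0 \<Longrightarrow> Spec (cay_adj n S) = mset (map (cayley_eigenvalue n S) [0..<n])"
  by (rule Spec_eq_mset_if_char_poly, rule char_poly_cay_adj)

lemma Re_cayley_eigenvalue_le: "Re (cayley_eigenvalue n S k) \<le> Re (cayley_eigenvalue n S 0)"
proof -
  have "Re (cayley_eigenvalue n S k) = (\<Sum>r<n. Re (residue_indicator n S r * unit_root n ^ (r * k)))"
    by (simp add: cayley_eigenvalue_def)
  also have "\<dots> \<le> (\<Sum>r<n. Re (residue_indicator n S r))"
  proof (rule sum_mono)
    fix r
    have "Re (unit_root n ^ (r * k)) \<le> 1"
      using complex_Re_le_cmod[of "unit_root n ^ (r * k)"] by simp
    then show "Re (residue_indicator n S r * unit_root n ^ (r * k)) \<le> Re (residue_indicator n S r)"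
      by (simp add: residue_indicator_def)
  qed
  also have "\<dots> = Re (cayley_eigenvalue n S 0)" by (simp add: cayley_eigenvalue_def)
  finally show ?thesis .
qed

lemma cayley_eigenvalue_eq_sum:
  assumes "S \<subseteq> {..<n}"
  shows "cayley_eigenvalue n S k = (\<Sum>s\<in>S. unit_root n ^ (s * k))"
proof -
  have "residue_indicator n S r = (if r \<in> S then 1 else 0)" if "r < n" for r
  proof -
    have "int s mod int n = int r \<longleftrightarrow> s = r" if "s \<in> S" for s
    proof -
      have "int s mod int n = int s" using assms that by auto
      then show ?thesis by simp
    qed
    then show ?thesis by (auto simp: residue_indicator_def)
  qed
  then have "cayley_eigenvalue n S k = (\<Sum>r<n. if r \<in> S then unit_root n ^ (r * k) else 0)"
    unfolding cayley_eigenvalue_def by (intro sum.cong) auto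
  also have "\<dots> = (\<Sum>s\<in>{..<n} \<inter> S. unit_root n ^ (s * k))"
    by (simp add: sum.inter_restrict)
  finally show ?thesis using assms by (simp add: Int_absorb1)
qed

lemma multiples_atLeastAtMost_eq_image:
  assumes "m * N = n" "m > 0"
  shows "{j\<in>{1..n}. m dvd j} = (\<lambda>i. m * Suc i) ` {..<N}"
proof (intro Set.set_eqI iffI)
  fix j assume "j \<in> {j\<in>{1..n}. m dvd j}"
  then obtain t where t: "j = m * t" "1 \<le> j" "j \<le> n" by auto
  then have "1 \<le> t" "t \<le> N" using assms by (auto intro: Suc_leI)
  then show "j \<in> (\<lambda>i. m * Suc i) ` {..<N}" using t by (intro image_eqI[of _ _ "t - 1"]) auto
next
  fix j assume "j \<in> (\<lambda>i. m * Suc i) ` {..<N}"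
  then obtain i where i: "i < N" "j = m * Suc i" by auto
  then have "m * Suc i \<le> m * N" by (metis Suc_leI mult_le_mono2)
  then show "j \<in> {j\<in>{1..n}. m dvd j}" using i assms by auto
qed

lemma sum_unit_root_multiples:
  assumes "m * N = n" "m > 0" "N > 0"
  shows "(\<Sum>j\<in>{1..n}. if m dvd j then unit_root n ^ (j * k) else 0) = (if N dvd k then of_nat N else 0)"
proof -
  have n: "n > 0" using assms by (metis nat_0_less_mult_iff)
  define z where "z = unit_root n ^ (m * k)"
  have "(\<Sum>j\<in>{1..n}. if m dvd j then unit_root n ^ (j * k) else 0) =
      (\<Sum>j\<in>{j\<in>{1..n}. m dvd j}. unit_root n ^ (j * k))"
    by (rule sum.inter_filter[symmetric]) simp
  also have "\<dots> = (\<Sum>j\<in>(\<lambda>i. m * Suc i) ` {..<N}. unit_root n ^ (j * k))"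
    using multiples_atLeastAtMost_eq_image[OF assms(1,2)] by simp
  also have "\<dots> = (\<Sum>i<N. unit_root n ^ (m * Suc i * k))"
    by (rule sum.reindex_cong[of "\<lambda>i. m * Suc i"]) (use assms in \<open>auto simp: inj_on_def\<close>)
  also have "\<dots> = (\<Sum>i<N. z * z ^ i)"
    by (intro sum.cong refl) (simp add: z_def algebra_simps flip: power_mult power_add)
  also have "\<dots> = z * (\<Sum>i<N. z ^ i)" by (simp add: sum_distrib_left)
  finally have sum: "(\<Sum>j\<in>{1..n}. if m dvd j then unit_root n ^ (j * k) else 0) = z * (\<Sum>i<N. z ^ i)" .
  have "m * k * N = n * k" using assms(1) by (simp add: algebra_simps)
  then have "z ^ N = unit_root n ^ (n * k)" by (simp only: z_def flip: power_mult)
  then have "z ^ N = 1" using unit_root_power_eq_1_iff[OF n] by simp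
  moreover have "z = 1 \<longleftrightarrow> N dvd k"
    using unit_root_power_eq_1_iff[OF n, of "m * k"] assms by (auto simp: z_def)
  ultimately show ?thesis using sum by (simp add: sum_gp_strict)
qed

lemma superincreasing_weights_eq:
  fixes f g :: "nat \<Rightarrow> int" and w0 w1 w2 w3 :: nat
  assumes counts: "\<And>r. (if f 0 = r then w0 else 0) + (if f 1 = r then w1 else 0)
      + (if f 2 = r then w2 else 0) + (if f 3 = r then w3 else 0)
    = (if g 0 = r then w0 else 0) + (if g 1 = r then w1 else 0)
      + (if g 2 = r then w2 else 0) + (if g 3 = r then w3 else 0)"
    and "w0 > w1 + w2 + w3" and "w1 > w2 + w3" and "w2 > w3"
  shows "f 0 = g 0" "f 1 = g 1" "f 2 = g 2"
proof -
  show e0: "f 0 = g 0"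
  proof (rule ccontr)
    assume "f 0 \<noteq> g 0"
    moreover have "w0 \<le> (if g 0 = f 0 then w0 else 0) + (if g 1 = f 0 then w1 else 0)
        + (if g 2 = f 0 then w2 else 0) + (if g 3 = f 0 then w3 else 0)"
      using counts[of "f 0"] by simp
    ultimately show False using assms(2) by (simp split: if_splits)
  qed
  show e1: "f 1 = g 1"
  proof (rule ccontr)
    assume "f 1 \<noteq> g 1"
    moreover have "w1 + (if f 0 = f 1 then w0 else 0) \<le> (if g 0 = f 1 then w0 else 0)
        + (if g 1 = f 1 then w1 else 0) + (if g 2 = f 1 then w2 else 0) + (if g 3 = f 1 then w3 else 0)"
      using counts[of "f 1"] by simp
    ultimately show False using assms(3) e0 by (simp split: if_splits)
  qed
  show "f 2 = g 2"
  proof (rule ccontr)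
    assume "f 2 \<noteq> g 2"
    moreover have "w2 + (if f 0 = f 2 then w0 else 0) + (if f 1 = f 2 then w1 else 0)
        \<le> (if g 0 = f 2 then w0 else 0) + (if g 1 = f 2 then w1 else 0)
        + (if g 2 = f 2 then w2 else 0) + (if g 3 = f 2 then w3 else 0)"
      using counts[of "f 2"] by simp
    ultimately show False using assms(4) e0 e1 by (simp split: if_splits)
  qed
qed

lemma mset_map_upt_eq_imp_max_eq:
  fixes f g :: "nat \<Rightarrow> 'a :: linorder"
  assumes "mset (map f [0..<n]) = mset (map g [0..<n])" "0 < n"
    and "\<And>k. f k \<le> f 0" and "\<And>k. g k \<le> g 0"
  shows "f 0 = g 0"
proof -
  have "set (map f [0..<n]) = set (map g [0..<n])"
    using arg_cong[OF assms(1), of set_mset] by simp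
  then have images: "f ` {0..<n} = g ` {0..<n}" by simp
  then obtain k where "f 0 = g k" using assms(2) by (metis atLeastLessThan_iff imageE image_eqI le0)
  moreover obtain l where "g 0 = f l" using images assms(2) by (metis atLeastLessThan_iff imageE image_eqI le0)
  ultimately show ?thesis using assms(3,4) by (metis order.antisym)
qed

lemma card_multiples_less:
  assumes "m > 0" "m dvd n"
  shows "card {k. k < n \<and> m dvd k} = n div m"
proof -
  have n: "m * (n div m) = n" using assms(2) by simp
  have "{k. k < n \<and> m dvd k} = (\<lambda>i. m * i) ` {..<n div m}"
  proof (intro Set.set_eqI iffI)
    fix k assume "k \<in> {k. k < n \<and> m dvd k}"
    then obtain i where i: "k = m * i" "k < n" by auto
    then have "m * i < m * (n div m)" using n by simp
    then have "i < n div m" by simp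
    then show "k \<in> (\<lambda>i. m * i) ` {..<n div m}" using i by auto
  next
    fix k assume "k \<in> (\<lambda>i. m * i) ` {..<n div m}"
    then obtain i where i: "k = m * i" "i < n div m" by auto
    then have "m * i < m * (n div m)" using assms(1) by simp
    then show "k \<in> {k. k < n \<and> m dvd k}" using i n by simp
  qed
  then show ?thesis using assms(1) by (simp add: card_image inj_on_def)
qed

lemma prime_dvd_power_mult_small_eq_0:
  fixes p q x :: int
  assumes q: "prime q" and pq: "3 \<le> p" "p < q" and dvd: "q dvd p ^ k * x" and small: "\<bar>x\<bar> \<le> 3"
  shows "x = 0"
proof (rule ccontr)
  assume "x \<noteq> 0"
  have "\<not> q dvd p"
  proof
    assume "q dvd p"
    then have "q \<le> p" using pq(1) by (simp add: zdvd_imp_le)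
    then show False using pq(2) by simp
  qed
  then have "\<not> q dvd p ^ k" using q prime_dvd_power by blast
  then have "q dvd x" using dvd prime_dvd_mult_iff[OF q] by blast
  then have "\<bar>q\<bar> \<le> \<bar>x\<bar>" using \<open>x \<noteq> 0\<close> dvd_imp_le_int by blast
  then show False using small pq by linarith
qed

text \<open>
  The arithmetic core of the argument, for the differences \<open>\<alpha>, \<beta>, \<gamma>, u, v, w \<in> {-1, 0, 1}\<close> of
  the indicators of \<open>p, p\<^sup>2, p\<^sup>3, q, pq, p\<^sup>2q\<close>: the first three hypotheses are the congruences
  of the eigenvalues at \<open>1, p, p\<^sup>2\<close>, the last one the equality of the eigenvalues at \<open>0\<close>.
\<close>
lemma indicator_differences_eq_0:
  fixes p q \<alpha> \<beta> \<gamma> u v w :: int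
  assumes bounds: "\<bar>\<alpha>\<bar> \<le> 1" "\<bar>\<beta>\<bar> \<le> 1" "\<bar>\<gamma>\<bar> \<le> 1" "\<bar>u\<bar> \<le> 1" "\<bar>v\<bar> \<le> 1" "\<bar>w\<bar> \<le> 1"
    and q: "prime q" and pq: "3 \<le> p" "p < q"
    and at_1: "q dvd \<beta> - \<gamma> - w"
    and at_p: "q dvd - p * v + (p - 1) * w + p * \<alpha> - (p - 1) * \<beta> - \<gamma>"
    and at_p2: "q dvd - (p^2 * u) + p * (p - 1) * v + (p - 1) * w
                  - p * (p - 1) * \<alpha> - (p - 1) * \<beta> - \<gamma>"
    and at_0: "(q - 1) * (p * (p - 1) * \<alpha> + (p - 1) * \<beta> + \<gamma>)
                 + p^2 * (p - 1) * u + p * (p - 1) * v + (p - 1) * w = 0"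
  shows "\<alpha> = 0 \<and> \<beta> = 0 \<and> \<gamma> = 0 \<and> u = 0 \<and> v = 0 \<and> w = 0"
proof -
  note small = prime_dvd_power_mult_small_eq_0[OF q pq]
  define U where "U = p * (p - 1) * \<alpha> + (p - 1) * \<beta> + \<gamma>"
  define V where "V = p^2 * (p - 1) * u + p * (p - 1) * v + (p - 1) * w"
  have UV: "(q - 1) * U + V = 0" using at_0 by (simp add: U_def V_def add.assoc)
  have "- (p^2 * u) + p * (p - 1) * v + (p - 1) * w - p * (p - 1) * \<alpha> - (p - 1) * \<beta> - \<gamma>
      = V - p^3 * u - U"
    by (simp add: U_def V_def algebra_simps power2_eq_square power3_eq_cube)
  also have "\<dots> = - (q * U) - p^3 * u" using UV by (simp add: algebra_simps)
  finally have "q dvd - (q * U) - p^3 * u" using at_p2 by simp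
  then have "q dvd (- (q * U) - p^3 * u) - q * (- U)" by (rule dvd_diff) simp
  then have "q dvd - (p^3 * u)" by simp
  then have u: "u = 0" using small[of 3 u] bounds(4) by simp
  have "\<bar>\<beta> - \<gamma> - w\<bar> \<le> 3" using bounds by arith
  then have \<beta>: "\<beta> = \<gamma> + w" using small[of 0 "\<beta> - \<gamma> - w"] at_1 by simp
  have "- p * v + (p - 1) * w + p * \<alpha> - (p - 1) * \<beta> - \<gamma> = p^1 * (\<alpha> - v - \<gamma>)"
    unfolding \<beta> by (simp add: algebra_simps)
  moreover have "\<bar>\<alpha> - v - \<gamma>\<bar> \<le> 3" using bounds by arith
  ultimately have \<alpha>: "\<alpha> = v + \<gamma>" using small[of 1 "\<alpha> - v - \<gamma>"] at_p by simp
  have "(q - 1) * U + V = q * ((p - 1) * (p * v + w) + p^2 * \<gamma>) - p^2 * \<gamma>"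
    unfolding U_def V_def u \<alpha> \<beta> by (simp add: algebra_simps power2_eq_square)
  then have key: "q * ((p - 1) * (p * v + w) + p^2 * \<gamma>) = p^2 * \<gamma>" using UV by simp
  then have "q dvd p^2 * \<gamma>" by (metis dvd_triv_left)
  then have \<gamma>: "\<gamma> = 0" using small[of 2 \<gamma>] bounds(3) by simp
  then have "q * ((p - 1) * (p * v + w)) = 0" using key by simp
  then have pvw: "p * v + w = 0" using pq by simp
  have v: "v = 0"
  proof (rule ccontr)
    assume "v \<noteq> 0"
    then have "3 \<le> p * \<bar>v\<bar>" using pq by (simp add: mult_mono[of 3 p 1 "\<bar>v\<bar>", simplified])
    then show False using pvw bounds(6) pq by (simp add: abs_mult)
  qed
  show ?thesis using u v \<alpha> \<beta> \<gamma> pvw by simp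
qed

locale prime_cube_times_prime =
  fixes p q n :: nat
  assumes p_prime: "prime p" and q_prime: "prime q" and p_ge_3: "3 \<le> p" and p_less_q: "p < q"
    and n_eq: "n = p ^ 3 * q"
begin

lemma p_gt_1: "p > 1" and q_gt_1: "q > 1" and n_pos: "n > 0"
  using p_ge_3 p_less_q n_eq by simp_all

lemma coprime_p_q_powers: "coprime (p ^ a) (q ^ b)"
  using primes_coprime[OF p_prime q_prime] p_less_q
  by (simp add: coprime_power_left_iff coprime_power_right_iff)

lemma pq_power_dvd_pq_power_iff: "p^a * q^b dvd p^c * q^d \<longleftrightarrow> a \<le> c \<and> b \<le> d"
proof
  assume dvd: "p^a * q^b dvd p^c * q^d"
  then have "p^a dvd p^c" using coprime_p_q_powers[of a d]
    by (metis coprime_dvd_mult_left_iff dvd_mult_left)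
  moreover have "q^b dvd q^d" using dvd coprime_p_q_powers[of c b]
    by (metis coprime_commute coprime_dvd_mult_right_iff dvd_mult_right)
  ultimately show "a \<le> c \<and> b \<le> d" using p_gt_1 q_gt_1 by (simp add: dvd_power_iff_le)
qed (simp add: le_imp_power_dvd mult_dvd_mono)

lemma dvd_n_imp_pq_power:
  assumes "d dvd n"
  obtains a b where "a \<le> 3" "b \<le> 1" "d = p^a * q^b"
proof -
  from assms n_eq obtain x y where xy: "d = x * y" "x dvd p^3" "y dvd q^1"
    using division_decomp by (metis power_one_right)
  then obtain a b where "a \<le> 3" "x = p^a" "b \<le> 1" "y = q^b"
    using divides_primepow_nat[OF p_prime] divides_primepow_nat[OF q_prime] by metis
  then show thesis using xy that by blast
qed

definition p_exp :: "nat \<Rightarrow> nat" where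
  "p_exp k = (if p^3 dvd k then 3 else if p^2 dvd k then 2 else if p dvd k then 1 else 0)"

definition q_exp :: "nat \<Rightarrow> nat" where
  "q_exp k = (if q dvd k then 1 else 0)"

lemma p_exp_le: "p_exp k \<le> 3" and q_exp_le: "q_exp k \<le> 1"
  by (simp_all add: p_exp_def q_exp_def)

lemma p_power_dvd_iff:
  assumes "i \<le> 3"
  shows "p^i dvd k \<longleftrightarrow> i \<le> p_exp k"
proof -
  have mono: "p^i dvd k" if "i \<le> j" "p^j dvd k" for i j
    using that le_imp_power_dvd dvd_trans by blast
  have "i = 0 \<or> i = 1 \<or> i = 2 \<or> i = 3" using assms by auto
  then show ?thesis
    using mono[of 1 2] mono[of 1 3] mono[of 2 3] by (auto simp: p_exp_def)
qed

lemma pq_power_dvd_iff: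
  assumes "a \<le> 3" "b \<le> 1"
  shows "p^a * q^b dvd k \<longleftrightarrow> a \<le> p_exp k \<and> b \<le> q_exp k"
proof -
  have "p^a * q^b dvd k \<longleftrightarrow> p^a dvd k \<and> q^b dvd k"
    using divides_mult[OF _ _ coprime_p_q_powers[of a b]] by (auto intro: dvd_mult_left dvd_mult_right)
  moreover have "q^b dvd k \<longleftrightarrow> b \<le> q_exp k"
    using assms by (cases b) (auto simp: q_exp_def)
  ultimately show ?thesis using p_power_dvd_iff[OF assms(1)] by simp
qed

lemma gcd_n_eq: "gcd k n = p^(p_exp k) * q^(q_exp k)"
proof -
  obtain a b where ab: "a \<le> 3" "b \<le> 1" "gcd k n = p^a * q^b"
    using dvd_n_imp_pq_power[of "gcd k n"] by auto
  have "p^(p_exp k) * q^(q_exp k) dvd gcd k n"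
    using pq_power_dvd_iff[OF p_exp_le q_exp_le] p_exp_le[of k] q_exp_le[of k]
    by (simp add: n_eq pq_power_dvd_pq_power_iff[of _ _ 3 1, simplified])
  then have "p_exp k \<le> a" "q_exp k \<le> b" using ab(3) pq_power_dvd_pq_power_iff by auto
  moreover have "p^a * q^b dvd k" using ab(3) by (metis gcd_dvd1)
  then have "a \<le> p_exp k" "b \<le> q_exp k" using pq_power_dvd_iff[OF ab(1,2)] by auto
  ultimately show ?thesis using ab(3) by simp
qed

definition multiples_sum :: "nat \<Rightarrow> nat \<Rightarrow> nat \<Rightarrow> int" where
  "multiples_sum a b k = (if p^(3-a) * q^(1-b) dvd k then int (p^(3-a) * q^(1-b)) else 0)"

lemma sum_unit_root_pq_multiples:
  assumes "a \<le> 3" "b \<le> 1"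
  shows "(\<Sum>j\<in>{1..n}. if p^a * q^b dvd j then unit_root n ^ (j * k) else 0) = of_int (multiples_sum a b k)"
proof -
  have "p^a * q^b * (p^(3-a) * q^(1-b)) = p^(a + (3-a)) * q^(b + (1-b))"
    by (simp add: power_add algebra_simps)
  then have "p^a * q^b * (p^(3-a) * q^(1-b)) = n" using assms n_eq by simp
  from sum_unit_root_multiples[OF this] show ?thesis
    using p_gt_1 q_gt_1 by (auto simp: multiples_sum_def)
qed

text \<open>
  Inclusion--exclusion: \<open>gcd(j, n) = p\<^sup>aq\<^sup>b\<close> iff \<open>p\<^sup>aq\<^sup>b\<close> divides \<open>j\<close> but neither
  \<open>p\<^sup>a\<^sup>+\<^sup>1q\<^sup>b\<close> (if \<open>a < 3\<close>) nor \<open>p\<^sup>aq\<close> (if \<open>b = 0\<close>) does.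
\<close>
definition gcd_class_sum :: "nat \<Rightarrow> nat \<Rightarrow> nat \<Rightarrow> int" where
  "gcd_class_sum a b k = multiples_sum a b k - (if a < 3 then multiples_sum (a+1) b k else 0)
     - (if b = 0 then multiples_sum a 1 k else 0) + (if a < 3 \<and> b = 0 then multiples_sum (a+1) 1 k else 0)"

lemma gcd_class_indicator_expand:
  fixes z :: complex
  assumes "a \<le> 3" "b \<le> 1"
  shows "(if p_exp j = a \<and> q_exp j = b then z else 0) =
     (if p^a * q^b dvd j then z else 0)
     - (if a < 3 then (if p^(a+1) * q^b dvd j then z else 0) else 0)
     - (if b = 0 then (if p^a * q^1 dvd j then z else 0) else 0)
     + (if a < 3 \<and> b = 0 then (if p^(a+1) * q^1 dvd j then z else 0) else 0)"
proof (cases "a < 3")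
  case True
  then show ?thesis
    using assms p_exp_le[of j] q_exp_le[of j] pq_power_dvd_iff[of a b j] pq_power_dvd_iff[of "a+1" b j]
      pq_power_dvd_iff[of a 1 j] pq_power_dvd_iff[of "a+1" 1 j]
    by (cases "q_exp j"; cases b; auto)
next
  case False
  then show ?thesis
    using assms p_exp_le[of j] q_exp_le[of j] pq_power_dvd_iff[of a b j] pq_power_dvd_iff[of a 1 j]
    by (cases "q_exp j"; cases b; auto)
qed

lemma sum_unit_root_gcd_class:
  assumes "a \<le> 3" "b \<le> 1"
  shows "(\<Sum>j\<in>{1..n}. if p_exp j = a \<and> q_exp j = b then unit_root n ^ (j * k) else 0)
    = of_int (gcd_class_sum a b k)"
proof -
  let ?S = "\<lambda>a b. \<Sum>j\<in>{1..n}. if p^a * q^b dvd j then unit_root n ^ (j * k) else (0 :: complex)"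
  have "(\<Sum>j\<in>{1..n}. if p_exp j = a \<and> q_exp j = b then unit_root n ^ (j * k) else 0) =
      ?S a b - (if a < 3 then ?S (a+1) b else 0) - (if b = 0 then ?S a 1 else 0)
      + (if a < 3 \<and> b = 0 then ?S (a+1) 1 else 0)"
    by (simp only: gcd_class_indicator_expand[OF assms], cases "a < 3"; cases "b = 0";
        simp add: sum.distrib sum_subtractf)
  also have "\<dots> = of_int (gcd_class_sum a b k)"
  proof (cases "a < 3")
    case True
    then show ?thesis
      using sum_unit_root_pq_multiples[of a b k] sum_unit_root_pq_multiples[of "a+1" b k]
        sum_unit_root_pq_multiples[of a 1 k] sum_unit_root_pq_multiples[of "a+1" 1 k] assms
      by (simp only: gcd_class_sum_def) simp
  next
    case False
    then show ?thesis
      using sum_unit_root_pq_multiples[of a b k] sum_unit_root_pq_multiples[of a 1 k] assms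
      by (simp only: gcd_class_sum_def) simp
  qed
  finally show ?thesis .
qed

definition proper_exps :: "(nat \<times> nat) set" where
  "proper_exps = {(0,0), (1,0), (2,0), (3,0), (0,1), (1,1), (2,1)}"

definition class_comb :: "(nat \<times> nat \<Rightarrow> int) \<Rightarrow> nat \<Rightarrow> int" where
  "class_comb x k = (\<Sum>(a,b)\<in>proper_exps. x (a,b) * gcd_class_sum a b k)"

definition divisor_indicator :: "nat set \<Rightarrow> nat \<times> nat \<Rightarrow> int" where
  "divisor_indicator D = (\<lambda>(a,b). if p^a * q^b \<in> D then 1 else 0)"

lemma proper_divisor_exps:
  assumes "d dvd n" "d \<noteq> n"
  obtains a b where "(a,b) \<in> proper_exps" "d = p^a * q^b"
proof -
  obtain a b where ab: "a \<le> 3" "b \<le> 1" "d = p^a * q^b" using dvd_n_imp_pq_power[OF assms(1)] .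
  then have "\<not> (a = 3 \<and> b = 1)" using assms(2) n_eq by auto
  then have "(a,b) \<in> proper_exps" using ab(1,2)
    by (auto simp: proper_exps_def numeral_eq_Suc le_Suc_eq)
  then show thesis using ab(3) that by blast
qed

lemma gcd_in_divisor_set_indicator:
  fixes z :: complex
  assumes "n \<notin> D"
  shows "(if gcd j n \<in> D then z else 0) = (\<Sum>(a,b)\<in>proper_exps.
    of_int (divisor_indicator D (a,b)) * (if p_exp j = a \<and> q_exp j = b then z else 0))"
proof -
  have "p^3 * q^1 \<notin> D" using assms n_eq by simp
  moreover have "p_exp j = 0 \<or> p_exp j = 1 \<or> p_exp j = 2 \<or> p_exp j = 3"
    using p_exp_le[of j] by auto
  moreover have "q_exp j = 0 \<or> q_exp j = 1" using q_exp_le[of j] by auto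
  ultimately show ?thesis
    unfolding gcd_n_eq proper_exps_def by (elim disjE; simp only:; simp add: divisor_indicator_def)
qed

lemma cayley_eigenvalue_conn_set:
  assumes D: "D \<subseteq> divisors_of n - {n}"
  shows "cayley_eigenvalue n (conn_set n D) k = of_int (class_comb (divisor_indicator D) k)"
proof -
  have conn: "conn_set n D = {j\<in>{1..n}. gcd j n \<in> D}"
    by (auto simp: conn_set_def G_def)
  have "n \<notin> D" using D by auto
  then have "conn_set n D \<subseteq> {..<n}" unfolding conn by (auto simp: le_less)
  then have "cayley_eigenvalue n (conn_set n D) k = (\<Sum>j\<in>conn_set n D. unit_root n ^ (j * k))"
    by (rule cayley_eigenvalue_eq_sum)
  also have "\<dots> = (\<Sum>j\<in>{1..n}. if gcd j n \<in> D then unit_root n ^ (j * k) else 0)"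
    unfolding conn by (rule sum.inter_filter) simp
  also have "\<dots> = (\<Sum>j\<in>{1..n}. \<Sum>(a,b)\<in>proper_exps. of_int (divisor_indicator D (a,b)) *
      (if p_exp j = a \<and> q_exp j = b then unit_root n ^ (j * k) else 0))"
    by (intro sum.cong refl gcd_in_divisor_set_indicator \<open>n \<notin> D\<close>)
  also have "\<dots> = (\<Sum>(a,b)\<in>proper_exps. of_int (divisor_indicator D (a,b)) *
      (\<Sum>j\<in>{1..n}. if p_exp j = a \<and> q_exp j = b then unit_root n ^ (j * k) else 0))"
    by (subst sum.swap) (simp add: case_prod_unfold sum_distrib_left)
  also have "\<dots> = (\<Sum>(a,b)\<in>proper_exps. of_int (divisor_indicator D (a,b) * gcd_class_sum a b k))"
  proof (intro sum.cong refl, clarify)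
    fix a b assume "(a, b) \<in> proper_exps"
    then have "a \<le> 3" "b \<le> 1" by (auto simp: proper_exps_def)
    then show "of_int (divisor_indicator D (a,b)) * (\<Sum>j\<in>{1..n}. if p_exp j = a \<and> q_exp j = b
        then unit_root n ^ (j * k) else 0) = of_int (divisor_indicator D (a,b) * gcd_class_sum a b k)"
      by (simp only: sum_unit_root_gcd_class of_int_mult)
  qed
  finally show ?thesis by (simp add: class_comb_def case_prod_unfold)
qed

lemma Spec_ICG_adj:
  assumes "D \<subseteq> divisors_of n - {n}"
  shows "Spec (ICG_adj n D) = image_mset of_int (mset (map (class_comb (divisor_indicator D)) [0..<n]))"
proof -
  have "cayley_eigenvalue n (conn_set n D) = of_int \<circ> class_comb (divisor_indicator D)"
    using cayley_eigenvalue_conn_set[OF assms] by (simp add: fun_eq_iff)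
  then show ?thesis
    unfolding ICG_adj_def Spec_cay_adj[OF n_pos] by (simp add: image_mset.compositionality)
qed

lemma class_comb_divisor_indicator_le:
  assumes "D \<subseteq> divisors_of n - {n}"
  shows "class_comb (divisor_indicator D) k \<le> class_comb (divisor_indicator D) 0"
  using Re_cayley_eigenvalue_le[of n "conn_set n D" k] cayley_eigenvalue_conn_set[OF assms] by simp

lemma class_comb_diff: "class_comb x k - class_comb y k = class_comb (\<lambda>e. x e - y e) k"
  by (simp add: class_comb_def case_prod_unfold left_diff_distrib sum_subtractf)

lemma multiples_sum_cong_p_part: "int q dvd multiples_sum a b k - multiples_sum a b (p ^ p_exp k)"
proof (cases "b \<ge> 1")
  case True
  have "p^(3-a) dvd k \<longleftrightarrow> p^(3-a) dvd p^(p_exp k)"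
    using p_power_dvd_iff[of "3-a" k] p_gt_1 by (simp add: dvd_power_iff_le)
  then show ?thesis using True by (simp add: multiples_sum_def)
qed (simp add: multiples_sum_def)

lemma class_comb_cong_p_part: "int q dvd class_comb x k - class_comb x (p ^ p_exp k)"
proof -
  have "int q dvd gcd_class_sum a b k - gcd_class_sum a b (p ^ p_exp k)" for a b
  proof -
    let ?d = "\<lambda>a b. multiples_sum a b k - multiples_sum a b (p ^ p_exp k)"
    have "gcd_class_sum a b k - gcd_class_sum a b (p ^ p_exp k) = ?d a b - (if a < 3 then ?d (a+1) b else 0)
        - (if b = 0 then ?d a 1 else 0) + (if a < 3 \<and> b = 0 then ?d (a+1) 1 else 0)"
      by (simp add: gcd_class_sum_def)
    then show ?thesis by (simp add: multiples_sum_cong_p_part dvd_add dvd_diff)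
  qed
  then show ?thesis
    by (simp add: class_comb_def case_prod_unfold dvd_sum flip: sum_subtractf right_diff_distrib)
qed

definition p_class_card :: "nat \<Rightarrow> nat" where
  "p_class_card c = card {k. k < n \<and> p_exp k = c}"

lemma card_p_power_multiples:
  assumes "i \<le> 3"
  shows "card {k. k < n \<and> p^i dvd k} = p^(3-i) * q"
proof -
  have "p^i * p^(3-i) = p^3" using assms by (simp flip: power_add)
  then have "n = p^i * (p^(3-i) * q)" using n_eq by (simp only: mult.assoc[symmetric])
  then have "n div p^i = p^(3-i) * q" using p_gt_1 by simp
  moreover have "p^i dvd n" using assms n_eq by (simp add: le_imp_power_dvd)
  ultimately show ?thesis using card_multiples_less[of "p^i" n] p_gt_1 by simp
qed

lemma p_class_card_eq:
  assumes "c < 3"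
  shows "p_class_card c = card {k. k < n \<and> p^c dvd k} - card {k. k < n \<and> p^(c+1) dvd k}"
proof -
  have "{k. k < n \<and> p_exp k = c} = {k. k < n \<and> p^c dvd k} - {k. k < n \<and> p^(c+1) dvd k}"
    using assms p_power_dvd_iff[of c] p_power_dvd_iff[of "c+1"] by auto
  moreover have "{k. k < n \<and> p^(c+1) dvd k} \<subseteq> {k. k < n \<and> p^c dvd k}"
    using le_imp_power_dvd[of c "c+1" p] dvd_trans by auto
  ultimately show ?thesis unfolding p_class_card_def by (simp add: card_Diff_subset)
qed

lemma p_class_card_3: "p_class_card 3 = q"
proof -
  have "p_exp k = 3 \<longleftrightarrow> p^3 dvd k" for k
    using p_power_dvd_iff[of 3] p_exp_le[of k] by auto
  then show ?thesis unfolding p_class_card_def using card_p_power_multiples[of 3] by simp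
qed

lemma p_class_card_superincreasing:
  "p_class_card 0 > p_class_card 1 + p_class_card 2 + p_class_card 3"
  "p_class_card 1 > p_class_card 2 + p_class_card 3"
  "p_class_card 2 > p_class_card 3"
proof -
  have c0: "card {k. k < n \<and> p^0 dvd k} = p * (p * (p * q))"
    using card_p_power_multiples[of 0] by (simp add: power3_eq_cube mult.assoc)
  have c1: "card {k. k < n \<and> p^1 dvd k} = p * (p * q)"
    using card_p_power_multiples[of 1] by (simp add: power2_eq_square mult.assoc)
  have c2: "card {k. k < n \<and> p^2 dvd k} = p * q"
    using card_p_power_multiples[of 2] by simp
  have c3: "card {k. k < n \<and> p^3 dvd k} = q"
    using card_p_power_multiples[of 3] by simp
  have l0: "(0::nat) < 3" and l1: "(1::nat) < 3" and l2: "(2::nat) < 3" by simp_all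
  have e0: "(0::nat) + 1 = 1" and e1: "(1::nat) + 1 = 2" and e2: "(2::nat) + 1 = 3" by simp_all
  have "p_class_card 0 = card {k. k < n \<and> p^0 dvd k} - card {k. k < n \<and> p^1 dvd k}"
    using p_class_card_eq[OF l0] by (simp only: e0)
  then have w0: "p_class_card 0 = p * (p * (p * q)) - p * (p * q)" by (simp only: c0 c1)
  have "p_class_card 1 = card {k. k < n \<and> p^1 dvd k} - card {k. k < n \<and> p^2 dvd k}"
    using p_class_card_eq[OF l1] by (simp only: e1)
  then have w1: "p_class_card 1 = p * (p * q) - p * q" by (simp only: c1 c2)
  have "p_class_card 2 = card {k. k < n \<and> p^2 dvd k} - card {k. k < n \<and> p^3 dvd k}"
    using p_class_card_eq[OF l2] by (simp only: e2)
  then have w2: "p_class_card 2 = p * q - q" by (simp only: c2 c3)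
  have "3 * q \<le> p * q" "3 * (p * q) \<le> p * (p * q)" "3 * (p * (p * q)) \<le> p * (p * (p * q))"
    using p_ge_3 by (intro mult_le_mono1; simp)+
  then show "p_class_card 0 > p_class_card 1 + p_class_card 2 + p_class_card 3"
    "p_class_card 1 > p_class_card 2 + p_class_card 3" "p_class_card 2 > p_class_card 3"
    unfolding w0 w1 w2 p_class_card_3 using q_gt_1 by linarith+
qed

lemma card_p_exp_filter:
  "card {k. k < n \<and> P (p_exp k)} = (if P 0 then p_class_card 0 else 0) + (if P 1 then p_class_card 1 else 0)
     + (if P 2 then p_class_card 2 else 0) + (if P 3 then p_class_card 3 else 0)"
proof -
  have finite: "finite {c. c \<le> 3 \<and> P c}" by simp
  have "{k. k < n \<and> P (p_exp k)} = (\<Union>c\<in>{c. c \<le> 3 \<and> P c}. {k. k < n \<and> p_exp k = c})"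
    using p_exp_le by blast
  then have "card {k. k < n \<and> P (p_exp k)} = (\<Sum>c\<in>{c. c \<le> 3 \<and> P c}. p_class_card c)"
    unfolding p_class_card_def by (simp only:) (rule card_UN_disjoint[OF finite]; auto)
  also have "{c. c \<le> 3 \<and> P c} = {c\<in>{0,1,2,3}. P c}" by auto
  also have "(\<Sum>c\<in>{c\<in>{0,1,2,3}. P c}. p_class_card c) = (\<Sum>c\<in>{0,1,2,3}. if P c then p_class_card c else 0)"
    by (rule sum.inter_filter) simp
  finally show ?thesis by (simp add: add.assoc)
qed

lemma count_class_comb_residues:
  "count (image_mset (\<lambda>v. v mod int q) (mset (map (class_comb x) [0..<n]))) r =
     (if class_comb x (p^0) mod int q = r then p_class_card 0 else 0)
     + (if class_comb x (p^1) mod int q = r then p_class_card 1 else 0)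
     + (if class_comb x (p^2) mod int q = r then p_class_card 2 else 0)
     + (if class_comb x (p^3) mod int q = r then p_class_card 3 else 0)"
proof -
  have "count (image_mset (\<lambda>v. v mod int q) (mset (map (class_comb x) [0..<n]))) r
      = length (filter ((=) r) (map (\<lambda>k. class_comb x k mod int q) [0..<n]))"
    by (simp only: mset_map[symmetric] map_map comp_def)
      (metis length_replicate replicate_count_mset_eq_filter_eq)
  also have "\<dots> = card {k. k < n \<and> r = class_comb x k mod int q}"
    by (simp add: length_filter_conv_card) (intro arg_cong[where f=card], auto)
  also have "{k. k < n \<and> r = class_comb x k mod int q} =
      {k. k < n \<and> class_comb x (p ^ p_exp k) mod int q = r}"
    using class_comb_cong_p_part by (auto simp: mod_eq_dvd_iff dvd_diff_commute)
  finally show ?thesis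
    using card_p_exp_filter[of "\<lambda>c. class_comb x (p^c) mod int q = r"] by simp
qed

lemma multiples_sum_p_power: "multiples_sum a b (p^c) = (if 3 - a \<le> c \<and> 1 \<le> b then int (p^(3-a)) else 0)"
  using pq_power_dvd_pq_power_iff[of "3-a" "1-b" c 0] by (auto simp: multiples_sum_def)

lemma class_comb_0:
  "class_comb x 0 = (int q - 1) * (int p^2 * (int p - 1) * x (0,0) + int p * (int p - 1) * x (1,0)
     + (int p - 1) * x (2,0) + x (3,0)) + int p^2 * (int p - 1) * x (0,1) + int p * (int p - 1) * x (1,1) + (int p - 1) * x (2,1)"
  using p_gt_1 q_gt_1
  by (simp add: class_comb_def proper_exps_def gcd_class_sum_def multiples_sum_def algebra_simps
      power2_eq_square power3_eq_cube of_nat_diff)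

lemma class_comb_1: "class_comb x (p^0) = x (2,0) - x (3,0) - x (2,1)"
  by (simp only: class_comb_def gcd_class_sum_def multiples_sum_p_power) (simp add: proper_exps_def algebra_simps)

lemma class_comb_p:
  "class_comb x (p^1) = - int p * x (1,1) + (int p - 1) * x (2,1) + int p * x (1,0) - (int p - 1) * x (2,0) - x (3,0)"
  by (simp only: class_comb_def gcd_class_sum_def multiples_sum_p_power) (simp add: proper_exps_def algebra_simps)

lemma class_comb_p2:
  "class_comb x (p^2) = - (int p^2 * x (0,1)) + int p * (int p - 1) * x (1,1) + (int p - 1) * x (2,1) + int p^2 * x (0,0)
     - int p * (int p - 1) * x (1,0) - (int p - 1) * x (2,0) - x (3,0)"
  by (simp only: class_comb_def gcd_class_sum_def multiples_sum_p_power)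
    (simp add: proper_exps_def algebra_simps power2_eq_square)

lemma class_comb_determined:
  assumes "\<And>e. \<bar>x e\<bar> \<le> 1" "x (0,0) = 0" "class_comb x 0 = 0"
    and "\<And>c. c < 3 \<Longrightarrow> int q dvd class_comb x (p^c)"
  shows "\<forall>e\<in>proper_exps. x e = 0"
proof -
  have "x (1,0) = 0 \<and> x (2,0) = 0 \<and> x (3,0) = 0 \<and> x (0,1) = 0 \<and> x (1,1) = 0 \<and> x (2,1) = 0"
  proof (rule indicator_differences_eq_0)
    show "prime (int q)" "3 \<le> int p" "int p < int q" using p_ge_3 p_less_q q_prime by auto
    have "int q dvd class_comb x (p^0)" by (rule assms(4)) simp
    then show "int q dvd x (2,0) - x (3,0) - x (2,1)" by (simp only: class_comb_1)
    have "int q dvd class_comb x (p^1)" by (rule assms(4)) simp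
    then show "int q dvd - int p * x (1,1) + (int p - 1) * x (2,1) + int p * x (1,0)
        - (int p - 1) * x (2,0) - x (3,0)" by (simp only: class_comb_p)
    show "int q dvd - (int p^2 * x (0,1)) + int p * (int p - 1) * x (1,1) + (int p - 1) * x (2,1)
        - int p * (int p - 1) * x (1,0) - (int p - 1) * x (2,0) - x (3,0)"
      using assms(2) assms(4)[of 2] by (simp add: class_comb_p2)
    show "(int q - 1) * (int p * (int p - 1) * x (1,0) + (int p - 1) * x (2,0) + x (3,0))
        + int p^2 * (int p - 1) * x (0,1) + int p * (int p - 1) * x (1,1) + (int p - 1) * x (2,1) = 0"
      using assms(2,3) by (simp add: class_comb_0)
  qed (use assms(1) in auto)
  then show ?thesis using assms(2) by (auto simp: proper_exps_def)
qed

lemma class_comb_0_eq: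
  assumes "D1 \<subseteq> divisors_of n - {n}" "D2 \<subseteq> divisors_of n - {n}"
    and "mset (map (class_comb (divisor_indicator D1)) [0..<n]) =
      mset (map (class_comb (divisor_indicator D2)) [0..<n])"
  shows "class_comb (divisor_indicator D1) 0 = class_comb (divisor_indicator D2) 0"
  using mset_map_upt_eq_imp_max_eq[OF assms(3) n_pos]
    class_comb_divisor_indicator_le[OF assms(1)] class_comb_divisor_indicator_le[OF assms(2)] .

lemma class_comb_p_powers_cong:
  assumes "mset (map (class_comb x) [0..<n]) = mset (map (class_comb y) [0..<n])" "c < 3"
  shows "int q dvd class_comb x (p^c) - class_comb y (p^c)"
proof -
  have "count (image_mset (\<lambda>v. v mod int q) (mset (map (class_comb x) [0..<n]))) r =
      count (image_mset (\<lambda>v. v mod int q) (mset (map (class_comb y) [0..<n]))) r" for r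
    using assms(1) by simp
  then have "class_comb x (p^c) mod int q = class_comb y (p^c) mod int q"
    using superincreasing_weights_eq[where f = "\<lambda>c. class_comb x (p^c) mod int q"
        and g = "\<lambda>c. class_comb y (p^c) mod int q", OF _ p_class_card_superincreasing] assms(2)
    unfolding count_class_comb_residues by (auto simp: less_Suc_eq numeral_eq_Suc)
  then show ?thesis by (simp add: mod_eq_dvd_iff)
qed

lemma divisor_sets_eq:
  assumes "D1 \<subseteq> divisors_of n - {n}" "D2 \<subseteq> divisors_of n - {n}"
    and "\<forall>e\<in>proper_exps. divisor_indicator D1 e = divisor_indicator D2 e"
  shows "D1 = D2"
proof (rule Set.set_eqI)
  fix d
  show "d \<in> D1 \<longleftrightarrow> d \<in> D2"
  proof (cases "d \<in> D1 \<union> D2")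
    case True
    then have "d dvd n" "d \<noteq> n" using assms(1,2) by (auto simp: divisors_of_def)
    then obtain a b where "(a,b) \<in> proper_exps" "d = p^a * q^b" by (rule proper_divisor_exps)
    then show ?thesis using assms(3) by (auto simp: divisor_indicator_def split: if_splits)
  qed auto
qed

end

theorem lemma3p21:
  fixes p q n :: nat and D1 D2 :: "nat set"
  assumes "prime p" and "prime q" and "3 \<le> p" and "p < q"
    and "n = p ^ 3 * q"
    and "D1 \<subseteq> divisors_of n - {n}" and "D2 \<subseteq> divisors_of n - {n}"
    and "1 \<in> D1" and "1 \<in> D2"
    and "Spec (ICG_adj n D1) = Spec (ICG_adj n D2)"
  shows "D1 = D2"
proof -
  interpret prime_cube_times_prime p q n
    using assms(1-5) by unfold_locales
  define x where "x e = divisor_indicator D1 e - divisor_indicator D2 e" for e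
  have eigenvalues: "mset (map (class_comb (divisor_indicator D1)) [0..<n]) =
      mset (map (class_comb (divisor_indicator D2)) [0..<n])"
    using assms(10) unfolding Spec_ICG_adj[OF assms(6)] Spec_ICG_adj[OF assms(7)]
    by (rule multiset.inj_map_strong[rotated]) simp
  have "\<forall>e\<in>proper_exps. x e = 0"
  proof (rule class_comb_determined)
    show "\<bar>x e\<bar> \<le> 1" for e
      by (simp add: x_def divisor_indicator_def split: prod.splits)
    show "x (0,0) = 0" using assms(8,9) by (simp add: x_def divisor_indicator_def)
    have x_diff: "class_comb x k = class_comb (divisor_indicator D1) k - class_comb (divisor_indicator D2) k"
      for k unfolding x_def by (rule class_comb_diff[symmetric])
    show "class_comb x 0 = 0"
      using class_comb_0_eq[OF assms(6,7) eigenvalues] by (simp add: x_diff)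
    show "int q dvd class_comb x (p^c)" if "c < 3" for c
      using class_comb_p_powers_cong[OF eigenvalues that] by (simp add: x_diff)
  qed
  then show ?thesis using divisor_sets_eq[OF assms(6,7)] by (simp add: x_def)
qed

end
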